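(* Under the hypotheses and notation of the setting below, let $0<r_*<1/4$. Then there exist positive constants $A_4,B_4$ such that for all $z$ with $0<|z|<r_*$, $$|\mathcal{R}_{\bar N}(z)|\le A_4\exp\Big\{-B_4\big(r_*/|z|\big)^{1/s}\Big\},\qquad \bar N=\big\lfloor B_4(r_*/|z|)^{1/s}\big\rfloor,$$ where $\lfloor x\rfloor$ is the integer part of $x$.
   Context: Setting: $F:D_1\to\mathbb{C}^n$ analytic, $D_1=\{z\in\mathbb{C}^n:|z_j|<1\}$, $F(z)=Az+f(z)$ with $f(0)=0$, $Df(0)=0$; $\hat H=\sum_{|\alpha|\ge1}h_\alpha z^\alpha$ is a formal power series with $\hat H(z)=z+O(|z|^2)$ formally satisfying $D\hat H\cdot F=A\hat H$ and Gevrey-$s$ ($s>0$): $|h_\alpha|\le A_1B_1^{-s|\alpha|}(|\alpha|!)^s$ for some $A_1,B_1>0$. $\mathcal{H}_N(z)=\sum_{1\le|\alpha|\le N}h_\alpha z^\alpha$ and $\mathcal{R}_N(z)=D\mathcal{H}_N(z)\cdot F(z)-A\mathcal{H}_N(z)$. $|z|=\max_j|z_j|$. *)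

theory Defs
  imports "HOL-Analysis.Analysis"
begin

text \<open>Vectors in C^n are modelled as complex^'n with a finite index type 'n.
  Multi-indices are functions 'n => nat.\<close>

definition mnorm :: "complex ^ 'n \<Rightarrow> real" where
  "mnorm z = Max (range (\<lambda>j. cmod (z $ j)))"

definition polydisc1 :: "(complex ^ 'n) set" where
  "polydisc1 = {z. \<forall>j. cmod (z $ j) < 1}"

definition mono_pow :: "complex ^ 'n \<Rightarrow> ('n \<Rightarrow> nat) \<Rightarrow> complex" where
  "mono_pow z \<alpha> = (\<Prod>j\<in>UNIV. (z $ j) ^ \<alpha> j)"

definition mi_deg :: "('n \<Rightarrow> nat) \<Rightarrow> nat" where
  "mi_deg \<alpha> = (\<Sum>j\<in>UNIV. \<alpha> j)"

definition unit_mi :: "'n \<Rightarrow> ('n \<Rightarrow> nat)" where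
  "unit_mi j = (\<lambda>k. if k = j then 1 else 0)"

definition trunc_series :: "(('n::finite \<Rightarrow> nat) \<Rightarrow> complex ^ 'n) \<Rightarrow> nat \<Rightarrow> complex ^ 'n \<Rightarrow> complex ^ 'n" where
  "trunc_series h N z = (\<Sum>\<alpha>\<in>{\<alpha>. 1 \<le> mi_deg \<alpha> \<and> mi_deg \<alpha> \<le> N}. mono_pow z \<alpha> *s h \<alpha>)"

definition partial_j :: "(complex ^ 'n \<Rightarrow> complex ^ 'n) \<Rightarrow> 'n \<Rightarrow> complex ^ 'n \<Rightarrow> complex ^ 'n" where
  "partial_j G j z = (\<chi> i. deriv (\<lambda>t. G (z + axis j t) $ i) 0)"

definition remainder :: "(('n::finite \<Rightarrow> nat) \<Rightarrow> complex ^ 'n) \<Rightarrow> (complex ^ 'n \<Rightarrow> complex ^ 'n)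
    \<Rightarrow> complex ^ 'n ^ 'n \<Rightarrow> nat \<Rightarrow> complex ^ 'n \<Rightarrow> complex ^ 'n" where
  "remainder h F A N z =
     (\<chi> i. \<Sum>j\<in>UNIV. partial_j (trunc_series h N) j z $ i * F z $ j) - A *v trunc_series h N z"

text \<open>Formal identity  D\<hat>H \<cdot> F = A \<hat>H, coefficientwise, where F = sum_beta c_beta z^beta.\<close>
definition formal_conj :: "(('n::finite \<Rightarrow> nat) \<Rightarrow> complex ^ 'n) \<Rightarrow> (('n \<Rightarrow> nat) \<Rightarrow> complex ^ 'n)
    \<Rightarrow> complex ^ 'n ^ 'n \<Rightarrow> bool" where
  "formal_conj h c A \<longleftrightarrow>
     (\<forall>\<gamma> i. (\<Sum>j\<in>UNIV. \<Sum>\<alpha>\<in>{\<alpha>. 1 \<le> \<alpha> j \<and> (\<forall>k. \<alpha> k \<le> \<gamma> k + unit_mi j k)}.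
               of_nat (\<alpha> j) * (h \<alpha> $ i) * (c (\<lambda>k. \<gamma> k + unit_mi j k - \<alpha> k) $ j))
            = (A *v h \<gamma>) $ i)"

end

theory Submission
  imports Defs
begin

text \<open>
  Comparing coefficients in the formal identity DH F = AH cancels every monomial of degree
  at most N in R_N and leaves
    R_N(z)_i = sum_j sum_(1 <= |alpha| <= N) alpha_j z^(alpha - e_j) h_alpha,i (F_j(z) - T_(N+1-|alpha|) F_j(z)),
  where T_L F_j is the Taylor polynomial of degree L of F_j. Cauchy estimates on the polydisc of
  radius 1/2 bound each Taylor tail by a constant times (2|z|)^(N+2-|alpha|), and with the Gevrey
  bound on h_alpha this gives |R_N(z)| <= M D^N (N!)^s |z|^(N+1). Taking N = floor x, where
  x = B (r/|z|)^(1/s) and B is chosen so that e D |z| x^s = 1, every factor D N^s |z| is at most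
  1/e, so the bound is at most M e^(1-x).
\<close>

section \<open>Multi-indices\<close>

lemma mi_deg_add: "mi_deg (\<lambda>k. a k + b k) = mi_deg a + mi_deg (b :: 'n::finite \<Rightarrow> nat)"
  unfolding mi_deg_def by (simp add: sum.distrib)

lemma mi_deg_diff:
  fixes \<alpha> \<beta> :: "'n::finite \<Rightarrow> nat"
  assumes "\<And>k. \<beta> k \<le> \<alpha> k"
  shows "mi_deg (\<lambda>k. \<alpha> k - \<beta> k) + mi_deg \<beta> = mi_deg \<alpha>"
  using assms by (simp add: mi_deg_add[symmetric])

lemma mi_deg_unit_mi [simp]: "mi_deg (unit_mi (j::'n::finite)) = 1"
  unfolding mi_deg_def unit_mi_def by simp

lemma mi_deg_eq_0_iff: "mi_deg (\<alpha>::'n::finite \<Rightarrow> nat) = 0 \<longleftrightarrow> \<alpha> = (\<lambda>_. 0)"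
  unfolding mi_deg_def by (auto simp: fun_eq_iff)

lemma mi_deg_ge_1_iff: "1 \<le> mi_deg \<alpha> \<longleftrightarrow> \<alpha> \<noteq> (\<lambda>_. 0 :: nat)" for \<alpha> :: "'n::finite \<Rightarrow> nat"
  using mi_deg_eq_0_iff[of \<alpha>] by linarith

lemma le_mi_deg: "\<alpha> k \<le> mi_deg (\<alpha>::'n::finite \<Rightarrow> nat)"
  unfolding mi_deg_def by (rule member_le_sum) auto

lemma mi_deg_add_minus_unit_mi:
  fixes \<alpha> \<beta> :: "'n::finite \<Rightarrow> nat"
  assumes "1 \<le> \<alpha> j"
  shows "mi_deg (\<lambda>k. \<alpha> k + \<beta> k - unit_mi j k) + 1 = mi_deg \<alpha> + mi_deg \<beta>"
proof -
  have "unit_mi j k \<le> \<alpha> k + \<beta> k" for k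
    using assms by (simp add: unit_mi_def)
  then show ?thesis
    using mi_deg_diff[of "unit_mi j" "\<lambda>k. \<alpha> k + \<beta> k"] by (simp add: mi_deg_add)
qed

lemma mi_deg_add_unit_mi_minus:
  fixes \<alpha> \<gamma> :: "'n::finite \<Rightarrow> nat"
  assumes "\<forall>k. \<alpha> k \<le> \<gamma> k + unit_mi j k"
  shows "mi_deg \<alpha> + mi_deg (\<lambda>k. \<gamma> k + unit_mi j k - \<alpha> k) = mi_deg \<gamma> + 1"
  using mi_deg_diff[of \<alpha> "\<lambda>k. \<gamma> k + unit_mi j k"] assms by (simp add: mi_deg_add)

lemma mi_deg_le_subset_PiE: "{\<alpha>::'n::finite \<Rightarrow> nat. mi_deg \<alpha> \<le> N} \<subseteq> PiE UNIV (\<lambda>_. {..N})"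
  using le_mi_deg order_trans by (fastforce simp: PiE_def)

lemma finite_mi_deg_le: "finite {\<alpha>::'n::finite \<Rightarrow> nat. mi_deg \<alpha> \<le> N}"
  by (rule finite_subset[OF mi_deg_le_subset_PiE]) (simp add: finite_PiE)

lemma card_mi_deg_le: "card {\<alpha>::'n::finite \<Rightarrow> nat. mi_deg \<alpha> \<le> N} \<le> (N + 1) ^ CARD('n)"
proof -
  have "card {\<alpha>::'n \<Rightarrow> nat. mi_deg \<alpha> \<le> N} \<le> card (PiE (UNIV::'n set) (\<lambda>_. {..N}))"
    by (rule card_mono[OF _ mi_deg_le_subset_PiE]) (simp add: finite_PiE)
  also have "\<dots> = (N + 1) ^ CARD('n)"
    by (simp add: card_PiE)
  finally show ?thesis .
qed

lemma card_mi_deg_between_mult_le: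
  "card {\<alpha>::'n::finite \<Rightarrow> nat. 1 \<le> mi_deg \<alpha> \<and> mi_deg \<alpha> \<le> N} * N \<le> (2 ^ (CARD('n) + 1)) ^ N"
proof -
  have "{\<alpha>::'n \<Rightarrow> nat. 1 \<le> mi_deg \<alpha> \<and> mi_deg \<alpha> \<le> N} \<subseteq> {\<alpha>. mi_deg \<alpha> \<le> N}"
    by auto
  then have "card {\<alpha>::'n \<Rightarrow> nat. 1 \<le> mi_deg \<alpha> \<and> mi_deg \<alpha> \<le> N} \<le> (N + 1) ^ CARD('n)"
    using card_mono[OF finite_mi_deg_le] card_mi_deg_le order.trans by blast
  then have "card {\<alpha>::'n \<Rightarrow> nat. 1 \<le> mi_deg \<alpha> \<and> mi_deg \<alpha> \<le> N} * N \<le> (N + 1) ^ CARD('n) * N"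
    by (rule mult_le_mono1)
  also have "\<dots> \<le> (N + 1) ^ (CARD('n) + 1)"
    by simp
  also have "\<dots> \<le> (2 ^ N) ^ (CARD('n) + 1)"
    using less_exp[of N] by (intro power_mono) (auto simp: Suc_le_eq)
  also have "\<dots> = (2 ^ (CARD('n) + 1)) ^ N"
    by (simp add: mult.commute flip: power_mult)
  finally show ?thesis .
qed

lemma bij_betw_mi_shift:
  fixes j :: "'n::finite"
  shows "bij_betw (\<lambda>(\<alpha>, \<beta>). (\<lambda>k. \<alpha> k + \<beta> k - unit_mi j k, \<alpha>))
    {(\<alpha>, \<beta>). 1 \<le> \<alpha> j \<and> \<beta> \<noteq> (\<lambda>_. 0) \<and> mi_deg \<alpha> + mi_deg \<beta> \<le> N + 1}
    {(\<gamma>, \<alpha>). 1 \<le> mi_deg \<gamma> \<and> mi_deg \<gamma> \<le> N \<and> 1 \<le> \<alpha> j \<and> (\<forall>k. \<alpha> k \<le> \<gamma> k + unit_mi j k)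
       \<and> \<alpha> \<noteq> (\<lambda>k. \<gamma> k + unit_mi j k)}"
    (is "bij_betw ?f ?D ?C")
proof (rule bij_betw_byWitness[where f' = "\<lambda>(\<gamma>, \<alpha>). (\<alpha>, \<lambda>k. \<gamma> k + unit_mi j k - \<alpha> k)"])
  have unit_le: "unit_mi j k \<le> \<alpha> k" if "1 \<le> \<alpha> j" for \<alpha> :: "'n \<Rightarrow> nat" and k
    using that by (simp add: unit_mi_def)
  show "\<forall>a\<in>?D. (\<lambda>(\<gamma>, \<alpha>). (\<alpha>, \<lambda>k. \<gamma> k + unit_mi j k - \<alpha> k)) (?f a) = a"
  proof
    fix a assume "a \<in> ?D"
    then obtain \<alpha> \<beta> where a: "a = (\<alpha>, \<beta>)" and "1 \<le> \<alpha> j"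
      by auto
    then have "(\<lambda>k. \<alpha> k + \<beta> k - unit_mi j k + unit_mi j k - \<alpha> k) = \<beta>"
      using unit_le[of \<alpha>] by (simp add: fun_eq_iff trans_le_add1)
    then show "(\<lambda>(\<gamma>, \<alpha>). (\<alpha>, \<lambda>k. \<gamma> k + unit_mi j k - \<alpha> k)) (?f a) = a"
      by (simp add: a)
  qed
  show "\<forall>b\<in>?C. ?f ((\<lambda>(\<gamma>, \<alpha>). (\<alpha>, \<lambda>k. \<gamma> k + unit_mi j k - \<alpha> k)) b) = b"
    by (auto simp: fun_eq_iff)
  show "?f ` ?D \<subseteq> ?C"
  proof
    fix x assume "x \<in> ?f ` ?D"
    then obtain \<alpha> \<beta> where x: "x = ?f (\<alpha>, \<beta>)" and "1 \<le> \<alpha> j" "\<beta> \<noteq> (\<lambda>_. 0)"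
      and deg_le: "mi_deg \<alpha> + mi_deg \<beta> \<le> N + 1"
      by auto
    define \<gamma> where "\<gamma> = (\<lambda>k. \<alpha> k + \<beta> k - unit_mi j k)"
    have \<gamma>_plus_unit: "\<gamma> k + unit_mi j k = \<alpha> k + \<beta> k" for k
      using unit_le[of \<alpha> k] \<open>1 \<le> \<alpha> j\<close> by (simp add: \<gamma>_def)
    have "mi_deg \<gamma> + 1 = mi_deg \<alpha> + mi_deg \<beta>" and "1 \<le> mi_deg \<alpha>" and "1 \<le> mi_deg \<beta>"
      using mi_deg_add_minus_unit_mi[where \<alpha> = \<alpha> and \<beta> = \<beta>, OF \<open>1 \<le> \<alpha> j\<close>] le_mi_deg[of \<alpha> j] \<open>1 \<le> \<alpha> j\<close>
        \<open>\<beta> \<noteq> (\<lambda>_. 0)\<close> mi_deg_ge_1_iff[of \<beta>]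
      by (auto simp: \<gamma>_def)
    moreover have "\<alpha> \<noteq> (\<lambda>k. \<gamma> k + unit_mi j k)"
      using \<open>\<beta> \<noteq> (\<lambda>_. 0)\<close> by (auto simp: \<gamma>_plus_unit fun_eq_iff)
    ultimately show "x \<in> ?C"
      using deg_le \<open>1 \<le> \<alpha> j\<close> by (simp add: x \<gamma>_plus_unit flip: \<gamma>_def)
  qed
  show "(\<lambda>(\<gamma>, \<alpha>). (\<alpha>, \<lambda>k. \<gamma> k + unit_mi j k - \<alpha> k)) ` ?C \<subseteq> ?D"
  proof
    fix x assume "x \<in> (\<lambda>(\<gamma>, \<alpha>). (\<alpha>, \<lambda>k. \<gamma> k + unit_mi j k - \<alpha> k)) ` ?C"
    then obtain \<gamma> \<alpha> where x: "x = (\<alpha>, \<lambda>k. \<gamma> k + unit_mi j k - \<alpha> k)" and "mi_deg \<gamma> \<le> N"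
      and "1 \<le> \<alpha> j" and le: "\<forall>k. \<alpha> k \<le> \<gamma> k + unit_mi j k" and ne: "\<alpha> \<noteq> (\<lambda>k. \<gamma> k + unit_mi j k)"
      by auto
    have "(\<lambda>k. \<gamma> k + unit_mi j k - \<alpha> k) \<noteq> (\<lambda>_. 0)"
      using le ne by (auto simp: fun_eq_iff intro: le_antisym)
    then show "x \<in> ?D"
      using mi_deg_add_unit_mi_minus[OF le] \<open>mi_deg \<gamma> \<le> N\<close> \<open>1 \<le> \<alpha> j\<close> by (simp add: x)
  qed
qed

lemma sum_mi_deg_reindex:
  fixes G :: "('n::finite \<Rightarrow> nat) \<Rightarrow> ('n \<Rightarrow> nat) \<Rightarrow> 'a::comm_monoid_add"
  assumes G_zero_right: "\<And>\<alpha>. G \<alpha> (\<lambda>_. 0) = 0"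
    and G_zero_left: "\<And>\<alpha> \<beta>. \<alpha> j = 0 \<Longrightarrow> G \<alpha> \<beta> = 0"
  shows "(\<Sum>\<alpha>\<in>{\<alpha>. 1 \<le> mi_deg \<alpha> \<and> mi_deg \<alpha> \<le> N}. \<Sum>\<beta>\<in>{\<beta>. mi_deg \<beta> \<le> N + 1 - mi_deg \<alpha>}. G \<alpha> \<beta>)
       = (\<Sum>\<gamma>\<in>{\<gamma>. 1 \<le> mi_deg \<gamma> \<and> mi_deg \<gamma> \<le> N}.
            \<Sum>\<alpha>\<in>{\<alpha>. 1 \<le> \<alpha> j \<and> (\<forall>k. \<alpha> k \<le> \<gamma> k + unit_mi j k)}. G \<alpha> (\<lambda>k. \<gamma> k + unit_mi j k - \<alpha> k))"
    (is "(\<Sum>\<alpha>\<in>?P. \<Sum>\<beta>\<in>?B \<alpha>. _) = (\<Sum>\<gamma>\<in>?P. \<Sum>\<alpha>\<in>?Q \<gamma>. ?G' \<gamma> \<alpha>)")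
proof -
  let ?D = "{(\<alpha>, \<beta> :: 'n \<Rightarrow> nat). 1 \<le> \<alpha> j \<and> \<beta> \<noteq> (\<lambda>_. 0) \<and> mi_deg \<alpha> + mi_deg \<beta> \<le> N + 1}"
  let ?C = "{(\<gamma>, \<alpha>). 1 \<le> mi_deg \<gamma> \<and> mi_deg \<gamma> \<le> N \<and> 1 \<le> \<alpha> j \<and> (\<forall>k. \<alpha> k \<le> \<gamma> k + unit_mi j k)
       \<and> \<alpha> \<noteq> (\<lambda>k. \<gamma> k + unit_mi j k)}"
  have fin_P: "finite ?P"
    by (rule finite_subset[OF _ finite_mi_deg_le]) auto
  have fin_Q: "finite (?Q \<gamma>)" for \<gamma>
    by (rule finite_subset[OF _ finite_mi_deg_le[of "mi_deg \<gamma> + 1"]])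
      (auto dest: mi_deg_add_unit_mi_minus)
  have "(\<Sum>\<alpha>\<in>?P. \<Sum>\<beta>\<in>?B \<alpha>. G \<alpha> \<beta>) = (\<Sum>(\<alpha>, \<beta>)\<in>Sigma ?P ?B. G \<alpha> \<beta>)"
    by (simp add: sum.Sigma fin_P finite_mi_deg_le)
  also have "\<dots> = (\<Sum>(\<alpha>, \<beta>)\<in>?D. G \<alpha> \<beta>)"
  proof (rule sum.mono_neutral_right)
    show "finite (Sigma ?P ?B)"
      using fin_P by (auto simp: finite_mi_deg_le)
    show "?D \<subseteq> Sigma ?P ?B"
    proof
      fix x assume "x \<in> ?D"
      then obtain \<alpha> \<beta> where x: "x = (\<alpha>, \<beta>)" "1 \<le> \<alpha> j" "\<beta> \<noteq> (\<lambda>_. 0)"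
        "mi_deg \<alpha> + mi_deg \<beta> \<le> N + 1"
        by auto
      moreover have "1 \<le> mi_deg \<alpha>" "1 \<le> mi_deg \<beta>"
        using le_mi_deg[of \<alpha> j] x(2,3) mi_deg_ge_1_iff[of \<beta>] by linarith+
      ultimately show "x \<in> Sigma ?P ?B"
        by auto
    qed
    show "\<forall>x\<in>Sigma ?P ?B - ?D. (\<lambda>(\<alpha>, \<beta>). G \<alpha> \<beta>) x = 0"
      using G_zero_left G_zero_right by (auto simp: Suc_le_eq intro: gr0I)
  qed
  also have "\<dots> = (\<Sum>(\<gamma>, \<alpha>)\<in>?C. ?G' \<gamma> \<alpha>)"
  proof -
    have "(\<Sum>(\<alpha>, \<beta>)\<in>?D. G \<alpha> \<beta>) = (\<Sum>(\<alpha>, \<beta>)\<in>?D. ?G' (\<lambda>k. \<alpha> k + \<beta> k - unit_mi j k) \<alpha>)"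
      by (intro sum.cong) (auto simp: unit_mi_def)
    then show ?thesis
      using sum.reindex_bij_betw[OF bij_betw_mi_shift, of "\<lambda>(\<gamma>, \<alpha>). ?G' \<gamma> \<alpha>"]
      by (simp add: case_prod_beta')
  qed
  also have "\<dots> = (\<Sum>(\<gamma>, \<alpha>)\<in>Sigma ?P ?Q. ?G' \<gamma> \<alpha>)"
  proof (rule sum.mono_neutral_left)
    show "finite (Sigma ?P ?Q)"
      using fin_P fin_Q by auto
    show "?C \<subseteq> Sigma ?P ?Q"
      by auto
    show "\<forall>x\<in>Sigma ?P ?Q - ?C. (\<lambda>(\<gamma>, \<alpha>). ?G' \<gamma> \<alpha>) x = 0"
      using G_zero_right by auto
  qed
  also have "\<dots> = (\<Sum>\<gamma>\<in>?P. \<Sum>\<alpha>\<in>?Q \<gamma>. ?G' \<gamma> \<alpha>)"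
    using fin_P fin_Q by (intro sum.Sigma[symmetric]) auto
  finally show ?thesis .
qed

section \<open>Monomials and the polydisc norm\<close>

lemma norm_nth_le_mnorm: "cmod (z $ k) \<le> mnorm z"
  unfolding mnorm_def by (rule Max_ge) auto

lemma mnorm_nonneg: "0 \<le> mnorm z"
  using norm_nth_le_mnorm[of z] norm_ge_zero order_trans by blast

lemma mnorm_le: "(\<And>i. cmod (x $ i) \<le> b) \<Longrightarrow> mnorm x \<le> b"
  unfolding mnorm_def by (rule Max.boundedI) auto

lemma polydisc1_eq: "polydisc1 = {z. mnorm z < 1}"
  unfolding polydisc1_def mnorm_def by auto

lemma mono_pow_add: "mono_pow z (\<lambda>k. a k + b k) = mono_pow z a * mono_pow z b"
  unfolding mono_pow_def by (simp add: power_add prod.distrib)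

lemma mono_pow_mult_shift:
  assumes "1 \<le> \<alpha> j" and "\<forall>k. \<alpha> k \<le> \<gamma> k + unit_mi j k"
  shows "mono_pow z (\<lambda>k. \<alpha> k - unit_mi j k) * mono_pow z (\<lambda>k. \<gamma> k + unit_mi j k - \<alpha> k) = mono_pow z \<gamma>"
proof -
  have "(\<lambda>k. (\<alpha> k - unit_mi j k) + (\<gamma> k + unit_mi j k - \<alpha> k)) = \<gamma>"
    using assms by (auto simp: fun_eq_iff unit_mi_def)
  then show ?thesis
    by (metis mono_pow_add)
qed

lemma mono_pow_const: "mono_pow (\<chi> k. w) \<alpha> = w ^ mi_deg \<alpha>"
  unfolding mono_pow_def mi_deg_def by (simp add: power_sum)

lemma mono_pow_zero_vec: "mono_pow 0 \<alpha> = (if \<alpha> = (\<lambda>_. 0) then 1 else 0)"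
  unfolding mono_pow_def by (auto simp: fun_eq_iff zero_power)

lemma norm_mono_pow_le: "cmod (mono_pow z \<alpha>) \<le> mnorm z ^ mi_deg \<alpha>"
proof -
  have "cmod (mono_pow z \<alpha>) = (\<Prod>k\<in>UNIV. cmod (z $ k) ^ \<alpha> k)"
    unfolding mono_pow_def by (simp add: prod_norm[symmetric] norm_power)
  also have "\<dots> \<le> (\<Prod>k\<in>UNIV. mnorm z ^ \<alpha> k)"
    by (intro prod_mono conjI power_mono norm_nth_le_mnorm) auto
  also have "\<dots> = mnorm z ^ mi_deg \<alpha>"
    unfolding mi_deg_def by (simp add: power_sum)
  finally show ?thesis .
qed

lemma norm_mono_pow_minus_unit_mi_le:
  assumes "1 \<le> \<alpha> j"
  shows "cmod (mono_pow z (\<lambda>k. \<alpha> k - unit_mi j k)) \<le> mnorm z ^ (mi_deg \<alpha> - 1)"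
proof -
  have "unit_mi j k \<le> \<alpha> k" for k
    using assms by (simp add: unit_mi_def)
  then have "mi_deg (\<lambda>k. \<alpha> k - unit_mi j k) = mi_deg \<alpha> - 1"
    using mi_deg_diff[of "unit_mi j" \<alpha>] by simp
  then show ?thesis
    using norm_mono_pow_le[of z "\<lambda>k. \<alpha> k - unit_mi j k"] by simp
qed

lemma norm_mono_pow_le_scaled:
  assumes "0 < \<rho>" and "mnorm z \<le> \<rho>" and "L < mi_deg \<beta>"
  shows "cmod (mono_pow z \<beta>) \<le> (mnorm z / \<rho>) ^ (L + 1) * \<rho> ^ mi_deg \<beta>"
proof -
  have "cmod (mono_pow z \<beta>) \<le> (mnorm z / \<rho>) ^ mi_deg \<beta> * \<rho> ^ mi_deg \<beta>"
    using norm_mono_pow_le[of z \<beta>] \<open>0 < \<rho>\<close> by (simp add: power_divide)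
  also have "\<dots> \<le> (mnorm z / \<rho>) ^ (L + 1) * \<rho> ^ mi_deg \<beta>"
    using assms mnorm_nonneg[of z] by (intro mult_right_mono power_decreasing) auto
  finally show ?thesis .
qed

section \<open>The remainder as a sum of Taylor tails\<close>

lemma has_field_derivative_mono_pow_axis:
  "((\<lambda>t. mono_pow (z + axis j t) \<alpha>) has_field_derivative
     of_nat (\<alpha> j) * mono_pow z (\<lambda>k. \<alpha> k - unit_mi j k)) (at 0)"
proof -
  define C where "C = (\<Prod>k\<in>UNIV - {j}. z $ k ^ \<alpha> k)"
  have split: "mono_pow w \<beta> = w $ j ^ \<beta> j * (\<Prod>k\<in>UNIV - {j}. w $ k ^ \<beta> k)" for w and \<beta> :: "'a \<Rightarrow> nat"
    unfolding mono_pow_def by (simp add: prod.remove)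
  have "mono_pow (z + axis j t) \<alpha> = (z $ j + t) ^ \<alpha> j * C" for t
    unfolding split[of _ \<alpha>] C_def by (auto simp: axis_def intro!: prod.cong)
  moreover have "mono_pow z (\<lambda>k. \<alpha> k - unit_mi j k) = z $ j ^ (\<alpha> j - 1) * C"
    unfolding split[of _ "\<lambda>k. \<alpha> k - unit_mi j k"] C_def by (auto simp: unit_mi_def intro!: prod.cong)
  ultimately show ?thesis
    by (auto intro!: derivative_eq_intros)
qed

lemma partial_j_trunc_series:
  "partial_j (trunc_series h N) j z $ i =
    (\<Sum>\<alpha>\<in>{\<alpha>. 1 \<le> mi_deg \<alpha> \<and> mi_deg \<alpha> \<le> N}. of_nat (\<alpha> j) * mono_pow z (\<lambda>k. \<alpha> k - unit_mi j k) * h \<alpha> $ i)"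
proof -
  have "((\<lambda>t. trunc_series h N (z + axis j t) $ i) has_field_derivative
      (\<Sum>\<alpha>\<in>{\<alpha>. 1 \<le> mi_deg \<alpha> \<and> mi_deg \<alpha> \<le> N}. of_nat (\<alpha> j) * mono_pow z (\<lambda>k. \<alpha> k - unit_mi j k) * h \<alpha> $ i)) (at 0)"
    unfolding trunc_series_def
    by (auto intro!: derivative_eq_intros has_field_derivative_mono_pow_axis)
  then show ?thesis
    unfolding partial_j_def by (simp add: DERIV_imp_deriv)
qed

lemma matrix_vector_mult_trunc_series:
  "(A *v trunc_series h N z) $ i = (\<Sum>\<gamma>\<in>{\<gamma>. 1 \<le> mi_deg \<gamma> \<and> mi_deg \<gamma> \<le> N}. mono_pow z \<gamma> * (A *v h \<gamma>) $ i)"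
  by (simp add: trunc_series_def vec.sum vector_scalar_commute)

lemma remainder_eq_sum_tails:
  fixes h c :: "('n::finite \<Rightarrow> nat) \<Rightarrow> complex ^ 'n"
  assumes formal: "formal_conj h c A" and c0: "c (\<lambda>_. 0) = 0"
  shows "remainder h F A N z $ i =
    (\<Sum>j\<in>UNIV. \<Sum>\<alpha>\<in>{\<alpha>. 1 \<le> mi_deg \<alpha> \<and> mi_deg \<alpha> \<le> N}.
       of_nat (\<alpha> j) * mono_pow z (\<lambda>k. \<alpha> k - unit_mi j k) * h \<alpha> $ i *
       (F z $ j - (\<Sum>\<beta>\<in>{\<beta>. mi_deg \<beta> \<le> N + 1 - mi_deg \<alpha>}. mono_pow z \<beta> * c \<beta> $ j)))"
proof -
  define P where "P = {\<alpha>::'n \<Rightarrow> nat. 1 \<le> mi_deg \<alpha> \<and> mi_deg \<alpha> \<le> N}"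
  define Q where "Q j \<gamma> = {\<alpha>::'n \<Rightarrow> nat. 1 \<le> \<alpha> j \<and> (\<forall>k. \<alpha> k \<le> \<gamma> k + unit_mi j k)}" for j \<gamma>
  define a where "a j \<alpha> = of_nat (\<alpha> j) * mono_pow z (\<lambda>k. \<alpha> k - unit_mi j k) * h \<alpha> $ i" for j \<alpha>
  define T where "T j \<alpha> = (\<Sum>\<beta>\<in>{\<beta>. mi_deg \<beta> \<le> N + 1 - mi_deg \<alpha>}. mono_pow z \<beta> * c \<beta> $ j)" for j and \<alpha> :: "'n \<Rightarrow> nat"
  have conj: "(A *v h \<gamma>) $ i =
      (\<Sum>j\<in>UNIV. \<Sum>\<alpha>\<in>Q j \<gamma>. of_nat (\<alpha> j) * h \<alpha> $ i * c (\<lambda>k. \<gamma> k + unit_mi j k - \<alpha> k) $ j)" for \<gamma>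
    using formal by (simp add: formal_conj_def Q_def)
  have "(A *v trunc_series h N z) $ i = (\<Sum>\<gamma>\<in>P. mono_pow z \<gamma> * (A *v h \<gamma>) $ i)"
    unfolding P_def by (rule matrix_vector_mult_trunc_series)
  also have "\<dots> = (\<Sum>\<gamma>\<in>P. \<Sum>j\<in>UNIV. \<Sum>\<alpha>\<in>Q j \<gamma>.
      mono_pow z \<gamma> * (of_nat (\<alpha> j) * h \<alpha> $ i * c (\<lambda>k. \<gamma> k + unit_mi j k - \<alpha> k) $ j))"
    by (simp add: conj sum_distrib_left mult.assoc)
  also have "\<dots> = (\<Sum>j\<in>UNIV. \<Sum>\<gamma>\<in>P. \<Sum>\<alpha>\<in>Q j \<gamma>.
      a j \<alpha> * (mono_pow z (\<lambda>k. \<gamma> k + unit_mi j k - \<alpha> k) * c (\<lambda>k. \<gamma> k + unit_mi j k - \<alpha> k) $ j))"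
    by (subst sum.swap) (auto simp: Q_def a_def mono_pow_mult_shift[symmetric] mult_ac intro!: sum.cong)
  also have "\<dots> = (\<Sum>j\<in>UNIV. \<Sum>\<alpha>\<in>P. a j \<alpha> * T j \<alpha>)"
    unfolding P_def Q_def T_def sum_distrib_left
    by (intro sum.cong refl sum_mi_deg_reindex[symmetric]) (simp_all add: a_def c0)
  finally have "(A *v trunc_series h N z) $ i = (\<Sum>j\<in>UNIV. \<Sum>\<alpha>\<in>P. a j \<alpha> * T j \<alpha>)" .
  moreover have "remainder h F A N z $ i = (\<Sum>j\<in>UNIV. (\<Sum>\<alpha>\<in>P. a j \<alpha>) * F z $ j) - (A *v trunc_series h N z) $ i"
    by (simp add: remainder_def partial_j_trunc_series P_def a_def)
  ultimately have "remainder h F A N z $ i = (\<Sum>j\<in>UNIV. \<Sum>\<alpha>\<in>P. a j \<alpha> * (F z $ j - T j \<alpha>))"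
    by (simp add: sum_distrib_right right_diff_distrib sum_subtractf)
  then show ?thesis
    by (simp add: P_def a_def T_def)
qed

section \<open>Cauchy and Gevrey estimates\<close>

lemma has_sum_mono_pow_at_zero:
  assumes "((\<lambda>\<beta>. mono_pow 0 \<beta> *s c \<beta>) has_sum y) UNIV"
  shows "y = c (\<lambda>_. 0)"
proof -
  have "((\<lambda>\<beta>. mono_pow 0 \<beta> *s c \<beta>) has_sum c (\<lambda>_. 0)) UNIV"
    by (rule has_sum_finite_neutralI[of "{\<lambda>_. 0}"]) (auto simp: mono_pow_zero_vec)
  with assms show ?thesis
    using has_sum_unique by blast
qed

lemma norm_series_tail_le:
  fixes c :: "('n::finite \<Rightarrow> nat) \<Rightarrow> complex ^ 'n" and \<rho> :: real
  assumes sum_z: "((\<lambda>\<beta>. mono_pow z \<beta> *s c \<beta>) has_sum Fz) UNIV"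
    and summable_\<rho>: "(\<lambda>\<beta>. mono_pow (\<chi> k. complex_of_real \<rho>) \<beta> *s c \<beta>) summable_on UNIV"
    and "0 < \<rho>" and "mnorm z \<le> \<rho>"
  shows "cmod (Fz $ j - (\<Sum>\<beta>\<in>{\<beta>. mi_deg \<beta> \<le> L}. mono_pow z \<beta> * c \<beta> $ j))
      \<le> (mnorm z / \<rho>) ^ (L + 1) * (\<Sum>\<^sub>\<infinity>\<beta>. \<rho> ^ mi_deg \<beta> * cmod (c \<beta> $ j))"
proof -
  define B where "B = {\<beta>::'n \<Rightarrow> nat. mi_deg \<beta> \<le> L}"
  define f where "f = (\<lambda>\<beta>. mono_pow z \<beta> * c \<beta> $ j)"
  define g where "g = (\<lambda>\<beta>. \<rho> ^ mi_deg \<beta> * cmod (c \<beta> $ j))"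
  define q where "q = (mnorm z / \<rho>) ^ (L + 1)"
  have "(f has_sum Fz $ j) UNIV"
    using has_sum_bounded_linear[OF bounded_linear_vec_nth sum_z, of j] by (simp add: f_def)
  then have tail: "(f has_sum Fz $ j - sum f B) (UNIV - B)"
    by (intro has_sum_Diff has_sum_finite) (auto simp: B_def finite_mi_deg_le)
  have "(\<lambda>\<beta>. of_real \<rho> ^ mi_deg \<beta> * c \<beta> $ j) summable_on UNIV"
    using summable_on_bounded_linear[OF bounded_linear_vec_nth summable_\<rho>, of j]
    by (simp add: mono_pow_const)
  then have g_summable: "g summable_on UNIV"
    using \<open>0 < \<rho>\<close> by (simp add: summable_on_iff_abs_summable_on_complex g_def norm_mult norm_power)
  have f_abs_summable: "(\<lambda>\<beta>. cmod (f \<beta>)) summable_on UNIV - B"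
    using has_sum_imp_summable[OF tail] by (simp add: summable_on_iff_abs_summable_on_complex)
  have "cmod (Fz $ j - sum f B) \<le> (\<Sum>\<^sub>\<infinity>\<beta>\<in>UNIV - B. cmod (f \<beta>))"
    unfolding infsumI[OF tail, symmetric] by (rule norm_infsum_bound[OF f_abs_summable])
  also have "\<dots> \<le> (\<Sum>\<^sub>\<infinity>\<beta>\<in>UNIV - B. q * g \<beta>)"
  proof (rule infsum_mono[OF f_abs_summable])
    show "(\<lambda>\<beta>. q * g \<beta>) summable_on UNIV - B"
      by (intro summable_on_cmult_right summable_on_subset[OF g_summable]) auto
    show "cmod (f \<beta>) \<le> q * g \<beta>" if "\<beta> \<in> UNIV - B" for \<beta>
    proof -
      have "L < mi_deg \<beta>"
        using that by (simp add: B_def)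
      then have "cmod (mono_pow z \<beta>) \<le> q * \<rho> ^ mi_deg \<beta>"
        unfolding q_def by (rule norm_mono_pow_le_scaled[OF \<open>0 < \<rho>\<close> \<open>mnorm z \<le> \<rho>\<close>])
      from mult_right_mono[OF this norm_ge_zero, of "c \<beta> $ j"] show ?thesis
        by (simp add: f_def g_def norm_mult mult.assoc)
    qed
  qed
  also have "\<dots> = q * (\<Sum>\<^sub>\<infinity>\<beta>\<in>UNIV - B. g \<beta>)"
    by (rule infsum_cmult_right')
  also have "\<dots> \<le> q * (\<Sum>\<^sub>\<infinity>\<beta>. g \<beta>)"
    using \<open>0 < \<rho>\<close> mnorm_nonneg[of z]
    by (intro mult_left_mono infsum_mono_neutral summable_on_subset[OF g_summable] g_summable)
      (auto simp: q_def g_def)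
  finally show ?thesis
    by (simp add: B_def f_def g_def q_def)
qed

lemma gevrey_coeff_le:
  fixes h :: "('n::finite \<Rightarrow> nat) \<Rightarrow> complex ^ 'n"
  assumes gevrey: "\<forall>\<alpha>. mnorm (h \<alpha>) \<le> A\<^sub>1 * B\<^sub>1 powr (- s * real (mi_deg \<alpha>)) * (fact (mi_deg \<alpha>)) powr s"
    and "0 \<le> A\<^sub>1" "0 < B\<^sub>1" "0 \<le> s" "B\<^sub>1 powr (- s) \<le> E" "mi_deg \<alpha> \<le> N"
  shows "cmod (h \<alpha> $ i) \<le> A\<^sub>1 * E ^ mi_deg \<alpha> * fact N powr s"
proof -
  have "0 \<le> E"
    using \<open>B\<^sub>1 powr (- s) \<le> E\<close> by (meson order_trans powr_ge_zero)
  have "B\<^sub>1 powr (- s * real (mi_deg \<alpha>)) = (B\<^sub>1 powr (- s)) ^ mi_deg \<alpha>"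
    using \<open>0 < B\<^sub>1\<close> by (simp add: powr_powr powr_realpow[symmetric])
  also have "\<dots> \<le> E ^ mi_deg \<alpha>"
    using assms by (intro power_mono) auto
  finally have "A\<^sub>1 * B\<^sub>1 powr (- s * real (mi_deg \<alpha>)) * (fact (mi_deg \<alpha>)) powr s
      \<le> A\<^sub>1 * E ^ mi_deg \<alpha> * fact N powr s"
    using assms \<open>0 \<le> E\<close> by (intro mult_mono mult_left_mono powr_mono2 fact_mono) auto
  then show ?thesis
    using norm_nth_le_mnorm[of "h \<alpha>" i] gevrey by (meson order_trans)
qed

lemma norm_remainder_term_le:
  fixes h c :: "('n::finite \<Rightarrow> nat) \<Rightarrow> complex ^ 'n" and \<rho> E C :: real
  assumes sum_z: "((\<lambda>\<beta>. mono_pow z \<beta> *s c \<beta>) has_sum Fz) UNIV"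
    and summable_\<rho>: "(\<lambda>\<beta>. mono_pow (\<chi> k. complex_of_real \<rho>) \<beta> *s c \<beta>) summable_on UNIV"
    and "0 < \<rho>" "mnorm z \<le> \<rho>" "1 / \<rho> \<le> E"
    and coeff: "cmod (h \<alpha> $ i) \<le> C * E ^ mi_deg \<alpha>" and "0 \<le> C"
    and deg: "1 \<le> mi_deg \<alpha>" "mi_deg \<alpha> \<le> N"
  shows "cmod (of_nat (\<alpha> j) * mono_pow z (\<lambda>k. \<alpha> k - unit_mi j k) * h \<alpha> $ i *
        (Fz $ j - (\<Sum>\<beta>\<in>{\<beta>. mi_deg \<beta> \<le> N + 1 - mi_deg \<alpha>}. mono_pow z \<beta> * c \<beta> $ j)))
      \<le> real N * C * E ^ (N + 2) * mnorm z ^ (N + 1) * (\<Sum>\<^sub>\<infinity>\<beta>. \<rho> ^ mi_deg \<beta> * cmod (c \<beta> $ j))"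
proof -
  define d where "d = mi_deg \<alpha>"
  define m where "m = mnorm z"
  define K where "K = (\<Sum>\<^sub>\<infinity>\<beta>. \<rho> ^ mi_deg \<beta> * cmod (c \<beta> $ j))"
  have "0 \<le> m" "0 \<le> K" "0 < E"
    using mnorm_nonneg[of z] \<open>0 < \<rho>\<close> \<open>1 / \<rho> \<le> E\<close> unfolding m_def K_def
    by (auto intro: infsum_nonneg order.strict_trans2[of 0 "1 / \<rho>"])
  have RHS_nonneg: "0 \<le> real N * C * E ^ (N + 2) * m ^ (N + 1) * K"
    using \<open>0 \<le> m\<close> \<open>0 \<le> K\<close> \<open>0 < E\<close> \<open>0 \<le> C\<close> by simp
  show ?thesis
  proof (cases "\<alpha> j = 0")
    case True
    then show ?thesis
      using RHS_nonneg by (simp add: m_def K_def)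
  next
    case False
    have "real (\<alpha> j) \<le> real N"
      using le_mi_deg[of \<alpha> j] deg by simp
    moreover have "cmod (mono_pow z (\<lambda>k. \<alpha> k - unit_mi j k)) \<le> m ^ (d - 1)"
      using norm_mono_pow_minus_unit_mi_le[of \<alpha> j z] False by (simp add: m_def d_def)
    moreover have "cmod (Fz $ j - (\<Sum>\<beta>\<in>{\<beta>. mi_deg \<beta> \<le> N + 1 - d}. mono_pow z \<beta> * c \<beta> $ j))
        \<le> (E * m) ^ (N + 2 - d) * K"
    proof -
      have "N + 1 - d + 1 = N + 2 - d"
        using deg by (simp add: d_def)
      then have "cmod (Fz $ j - (\<Sum>\<beta>\<in>{\<beta>. mi_deg \<beta> \<le> N + 1 - d}. mono_pow z \<beta> * c \<beta> $ j))
          \<le> (m / \<rho>) ^ (N + 2 - d) * K"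
        using norm_series_tail_le[OF sum_z summable_\<rho> \<open>0 < \<rho>\<close> \<open>mnorm z \<le> \<rho>\<close>, of j "N + 1 - d"]
        by (simp add: m_def K_def)
      also have "\<dots> \<le> (E * m) ^ (N + 2 - d) * K"
        using mult_right_mono[OF \<open>1 / \<rho> \<le> E\<close> \<open>0 \<le> m\<close>] \<open>0 \<le> m\<close> \<open>0 \<le> K\<close> \<open>0 < \<rho>\<close>
        by (intro mult_right_mono power_mono) auto
      finally show ?thesis .
    qed
    ultimately have "cmod (of_nat (\<alpha> j) * mono_pow z (\<lambda>k. \<alpha> k - unit_mi j k) * h \<alpha> $ i *
        (Fz $ j - (\<Sum>\<beta>\<in>{\<beta>. mi_deg \<beta> \<le> N + 1 - d}. mono_pow z \<beta> * c \<beta> $ j)))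
      \<le> real N * m ^ (d - 1) * (C * E ^ d) * ((E * m) ^ (N + 2 - d) * K)"
      unfolding norm_mult using coeff \<open>0 \<le> m\<close> \<open>0 \<le> C\<close> \<open>0 < E\<close>
      by (intro mult_mono) (auto simp: d_def)
    also have "\<dots> = real N * C * (E ^ d * E ^ (N + 2 - d)) * (m ^ (d - 1) * m ^ (N + 2 - d)) * K"
      by (simp add: power_mult_distrib mult_ac)
    also have "\<dots> = real N * C * E ^ (N + 2) * m ^ (N + 1) * K"
      using deg by (simp add: d_def flip: power_add)
    finally show ?thesis
      by (simp add: d_def m_def K_def)
  qed
qed

lemma mnorm_remainder_le:
  fixes h c :: "('n::finite \<Rightarrow> nat) \<Rightarrow> complex ^ 'n" and \<rho> E A\<^sub>1 B\<^sub>1 s :: real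
  assumes formal: "formal_conj h c A" and c0: "c (\<lambda>_. 0) = 0"
    and sum_z: "((\<lambda>\<beta>. mono_pow z \<beta> *s c \<beta>) has_sum F z) UNIV"
    and summable_\<rho>: "(\<lambda>\<beta>. mono_pow (\<chi> k. complex_of_real \<rho>) \<beta> *s c \<beta>) summable_on UNIV"
    and "0 < \<rho>" "mnorm z \<le> \<rho>"
    and gevrey: "\<forall>\<alpha>. mnorm (h \<alpha>) \<le> A\<^sub>1 * B\<^sub>1 powr (- s * real (mi_deg \<alpha>)) * (fact (mi_deg \<alpha>)) powr s"
    and "0 \<le> A\<^sub>1" "0 < B\<^sub>1" "0 \<le> s"
    and E_ge: "1 / \<rho> \<le> E" "B\<^sub>1 powr (- s) \<le> E"
  shows "mnorm (remainder h F A N z) \<le>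
    A\<^sub>1 * E ^ 2 * (\<Sum>j\<in>UNIV. \<Sum>\<^sub>\<infinity>\<beta>. \<rho> ^ mi_deg \<beta> * cmod (c \<beta> $ j))
      * (2 ^ (CARD('n) + 1) * E) ^ N * fact N powr s * mnorm z ^ (N + 1)"
proof (rule mnorm_le)
  fix i
  define P where "P = {\<alpha>::'n \<Rightarrow> nat. 1 \<le> mi_deg \<alpha> \<and> mi_deg \<alpha> \<le> N}"
  define C where "C = A\<^sub>1 * fact N powr s"
  define K where "K j = (\<Sum>\<^sub>\<infinity>\<beta>. \<rho> ^ mi_deg \<beta> * cmod (c \<beta> $ j))" for j
  define b where "b = C * E ^ (N + 2) * mnorm z ^ (N + 1)"
  have "0 \<le> C"
    using \<open>0 \<le> A\<^sub>1\<close> by (simp add: C_def)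
  have "0 \<le> b"
    using \<open>0 \<le> C\<close> \<open>0 < \<rho>\<close> mnorm_nonneg[of z] order.trans[OF _ E_ge(1), of 0] by (simp add: b_def)
  have "cmod (remainder h F A N z $ i) \<le> (\<Sum>j\<in>UNIV. \<Sum>\<alpha>\<in>P. real N * b * K j)"
    unfolding remainder_eq_sum_tails[OF formal c0] P_def
  proof (intro order.trans[OF norm_sum] sum_mono order.trans[OF norm_sum])
    fix j :: 'n and \<alpha> :: "'n \<Rightarrow> nat"
    assume "\<alpha> \<in> {\<alpha>. 1 \<le> mi_deg \<alpha> \<and> mi_deg \<alpha> \<le> N}"
    then have deg: "1 \<le> mi_deg \<alpha>" "mi_deg \<alpha> \<le> N"
      by auto
    have "cmod (h \<alpha> $ i) \<le> C * E ^ mi_deg \<alpha>"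
      using gevrey_coeff_le[OF gevrey \<open>0 \<le> A\<^sub>1\<close> \<open>0 < B\<^sub>1\<close> \<open>0 \<le> s\<close> E_ge(2) deg(2)]
      by (simp add: C_def mult_ac)
    from norm_remainder_term_le[where h = h and \<alpha> = \<alpha>, OF sum_z summable_\<rho> \<open>0 < \<rho>\<close> \<open>mnorm z \<le> \<rho>\<close> E_ge(1) this \<open>0 \<le> C\<close> deg]
    show "cmod (of_nat (\<alpha> j) * mono_pow z (\<lambda>k. \<alpha> k - unit_mi j k) * h \<alpha> $ i *
        (F z $ j - (\<Sum>\<beta>\<in>{\<beta>. mi_deg \<beta> \<le> N + 1 - mi_deg \<alpha>}. mono_pow z \<beta> * c \<beta> $ j)))
      \<le> real N * b * K j"
      by (simp add: b_def K_def mult_ac)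
  qed
  also have "\<dots> = real (card P * N) * b * sum K UNIV"
    by (simp add: sum_distrib_left sum_distrib_right mult_ac)
  also have "\<dots> \<le> real ((2 ^ (CARD('n) + 1)) ^ N) * b * sum K UNIV"
  proof -
    have "card P * N \<le> (2 ^ (CARD('n) + 1)) ^ N"
      unfolding P_def by (rule card_mi_deg_between_mult_le)
    then have "real (card P * N) \<le> real ((2 ^ (CARD('n) + 1)) ^ N)"
      by (simp only: of_nat_le_iff)
    moreover have "0 \<le> sum K UNIV"
      unfolding K_def using \<open>0 < \<rho>\<close> by (intro sum_nonneg infsum_nonneg) simp
    ultimately show ?thesis
      using \<open>0 \<le> b\<close> by (intro mult_right_mono) auto
  qed
  also have "\<dots> = A\<^sub>1 * E ^ 2 * sum K UNIV * (2 ^ (CARD('n) + 1) * E) ^ N * fact N powr s * mnorm z ^ (N + 1)"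
    by (simp add: b_def C_def power_add power_mult_distrib power2_eq_square mult_ac)
  finally show "cmod (remainder h F A N z $ i) \<le> A\<^sub>1 * E ^ 2 * (\<Sum>j\<in>UNIV. \<Sum>\<^sub>\<infinity>\<beta>. \<rho> ^ mi_deg \<beta> * cmod (c \<beta> $ j))
      * (2 ^ (CARD('n) + 1) * E) ^ N * fact N powr s * mnorm z ^ (N + 1)"
    by (simp add: K_def)
qed

section \<open>Optimal truncation\<close>

lemma fact_powr_le_power:
  fixes s :: real
  assumes "0 \<le> s"
  shows "fact N powr s \<le> (real N powr s) ^ N"
proof (cases "N = 0")
  case False
  have "(fact N :: real) powr s \<le> real (N ^ N) powr s"
    using fact_le_power[of N] assms by (intro powr_mono2) auto
  also have "\<dots> = (real N powr s) ^ N"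
    using False by (simp add: powr_realpow[symmetric] powr_powr mult.commute)
  finally show ?thesis .
qed simp

lemma power_fact_powr_le_exp_floor:
  fixes D s m x :: real
  assumes "0 < D" "0 < s" "0 < m" "0 \<le> x" and small: "exp 1 * D * m * x powr s \<le> 1"
  shows "D ^ nat \<lfloor>x\<rfloor> * fact (nat \<lfloor>x\<rfloor>) powr s * m ^ nat \<lfloor>x\<rfloor> \<le> exp 1 * exp (- x)"
proof -
  define N where "N = nat \<lfloor>x\<rfloor>"
  have "real N \<le> x" "x < real N + 1"
    using \<open>0 \<le> x\<close> by (auto simp: N_def)
  have "D * real N powr s * m \<le> D * x powr s * m"
    using \<open>real N \<le> x\<close> assms by (intro mult_right_mono mult_left_mono powr_mono2) auto
  also have "\<dots> \<le> exp (- 1)"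
    using small by (simp add: exp_minus field_simps)
  finally have ratio: "D * real N powr s * m \<le> exp (- 1)" .
  have "D ^ N * fact N powr s * m ^ N \<le> D ^ N * (real N powr s) ^ N * m ^ N"
    using fact_powr_le_power[of s N] assms by (intro mult_right_mono mult_left_mono) auto
  also have "\<dots> = (D * real N powr s * m) ^ N"
    by (simp add: power_mult_distrib)
  also have "\<dots> \<le> exp (- 1) ^ N"
    using ratio assms by (intro power_mono) auto
  also have "\<dots> = exp (- real N)"
    by (simp flip: exp_of_nat_mult)
  also have "\<dots> \<le> exp 1 * exp (- x)"
    using \<open>x < real N + 1\<close> by (simp flip: exp_add)
  finally show ?thesis
    by (simp add: N_def)
qed

lemma gevrey_bound_optimal_truncation:
  fixes R :: "nat \<Rightarrow> 'a \<Rightarrow> real" and \<nu> :: "'a \<Rightarrow> real" and M D s r :: real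
  assumes "0 \<le> M" "0 < D" "0 < s" "0 < r" "r \<le> 1"
    and bound: "\<And>N z. 0 < \<nu> z \<Longrightarrow> \<nu> z < r \<Longrightarrow> R N z \<le> M * D ^ N * fact N powr s * \<nu> z ^ (N + 1)"
  shows "\<exists>A B. A > 0 \<and> B > 0 \<and> (\<forall>z. 0 < \<nu> z \<and> \<nu> z < r \<longrightarrow>
    R (nat \<lfloor>B * (r / \<nu> z) powr (1 / s)\<rfloor>) z \<le> A * exp (- B * (r / \<nu> z) powr (1 / s)))"
proof -
  define B where "B = (1 / (exp 1 * D * r)) powr (1 / s)"
  have "0 < B"
    using assms by (simp add: B_def)
  show ?thesis
  proof (intro exI conjI allI impI)
    show "0 < (M + 1) * exp 1"
      using \<open>0 \<le> M\<close> by (simp add: add_nonneg_pos)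
    show "0 < B"
      by fact
    fix z assume z: "0 < \<nu> z \<and> \<nu> z < r"
    define x where "x = B * (r / \<nu> z) powr (1 / s)"
    define N where "N = nat \<lfloor>x\<rfloor>"
    have "x powr s = B powr s * ((r / \<nu> z) powr (1 / s)) powr s"
      using \<open>0 < B\<close> z by (simp add: x_def powr_mult)
    also have "\<dots> = 1 / (exp 1 * D * \<nu> z)"
      using assms z by (simp add: B_def powr_powr)
    finally have "exp 1 * D * \<nu> z * x powr s \<le> 1"
      using assms z by simp
    then have decay: "D ^ N * fact N powr s * \<nu> z ^ N \<le> exp 1 * exp (- x)"
      unfolding N_def using assms z \<open>0 < B\<close>
      by (intro power_fact_powr_le_exp_floor) (auto simp: x_def)
    have "R N z \<le> M * (D ^ N * fact N powr s * \<nu> z ^ N) * \<nu> z"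
      using bound[of z N] z by (simp add: mult_ac)
    also have "\<dots> \<le> (M + 1) * (exp 1 * exp (- x)) * 1"
      using z assms by (intro mult_mono[OF mult_mono[OF _ decay]]) auto
    finally show "R (nat \<lfloor>B * (r / \<nu> z) powr (1 / s)\<rfloor>) z \<le> (M + 1) * exp 1 * exp (- B * (r / \<nu> z) powr (1 / s))"
      by (simp add: N_def x_def mult_ac)
  qed
qed

theorem mainTheorem3:
  fixes F f :: "complex ^ ('n::finite) \<Rightarrow> complex ^ 'n"
    and A :: "complex ^ 'n ^ 'n"
    and c h :: "('n \<Rightarrow> nat) \<Rightarrow> complex ^ 'n"
    and s A\<^sub>1 B\<^sub>1 r :: real
  assumes analytic: "\<forall>z\<in>polydisc1. ((\<lambda>\<beta>. mono_pow z \<beta> *s c \<beta>) has_sum F z) UNIV"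
    and F_decomp: "\<forall>z\<in>polydisc1. F z = A *v z + f z"
    and f0: "f 0 = 0"
    and Df0: "(f has_derivative (\<lambda>_. 0)) (at 0)"
    and h0: "h (\<lambda>_. 0) = 0"
    and h_lin: "\<forall>j. h (unit_mi j) = axis j 1"
    and formal: "formal_conj h c A"
    and s_pos: "s > 0"
    and A1_pos: "A\<^sub>1 > 0" and B1_pos: "B\<^sub>1 > 0"
    and gevrey: "\<forall>\<alpha>. mnorm (h \<alpha>) \<le> A\<^sub>1 * B\<^sub>1 powr (- s * real (mi_deg \<alpha>)) * (fact (mi_deg \<alpha>)) powr s"
    and r_pos: "0 < r" and r_lt: "r < 1/4"
  shows "\<exists>A\<^sub>4 B\<^sub>4. A\<^sub>4 > 0 \<and> B\<^sub>4 > 0 \<and>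
    (\<forall>z. 0 < mnorm z \<and> mnorm z < r \<longrightarrow>
       mnorm (remainder h F A (nat \<lfloor>B\<^sub>4 * (r / mnorm z) powr (1 / s)\<rfloor>) z)
         \<le> A\<^sub>4 * exp (- B\<^sub>4 * (r / mnorm z) powr (1 / s)))"
proof -
  have "0 \<in> polydisc1" and half_in: "(\<chi> k. complex_of_real (1 / 2)) \<in> polydisc1"
    by (simp_all add: polydisc1_def)
  have c0: "c (\<lambda>_. 0) = 0"
    using has_sum_mono_pow_at_zero[OF analytic[rule_format, OF \<open>0 \<in> polydisc1\<close>]]
      F_decomp[rule_format, OF \<open>0 \<in> polydisc1\<close>] f0 by simp
  have summable_half: "(\<lambda>\<beta>. mono_pow (\<chi> k. complex_of_real (1 / 2)) \<beta> *s c \<beta>) summable_on UNIV"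
    using analytic half_in by (blast intro: has_sum_imp_summable)
  define E where "E = max 2 (B\<^sub>1 powr (- s))"
  define K where "K = (\<Sum>j\<in>UNIV. \<Sum>\<^sub>\<infinity>\<beta>. (1 / 2) ^ mi_deg \<beta> * cmod (c \<beta> $ j))"
  have "0 \<le> K"
    unfolding K_def by (intro sum_nonneg infsum_nonneg) simp
  show ?thesis
  proof (rule gevrey_bound_optimal_truncation[where M = "A\<^sub>1 * E ^ 2 * K" and D = "2 ^ (CARD('n) + 1) * E"])
    fix N and z :: "complex ^ 'n"
    assume "0 < mnorm z" "mnorm z < r"
    then have "z \<in> polydisc1" "mnorm z \<le> 1 / 2"
      using r_lt by (auto simp: polydisc1_eq)
    then show "mnorm (remainder h F A N z)
        \<le> A\<^sub>1 * E ^ 2 * K * (2 ^ (CARD('n) + 1) * E) ^ N * fact N powr s * mnorm z ^ (N + 1)"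
      using mnorm_remainder_le[OF formal c0 _ summable_half _ _ gevrey, of z] analytic A1_pos B1_pos s_pos
      by (simp add: K_def E_def)
  qed (use A1_pos \<open>0 \<le> K\<close> s_pos r_pos r_lt in \<open>auto simp: E_def\<close>)
qed

end
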